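(* Let $P$ be a poset and let $\mathcal{U}_1\subseteq\mathcal{U}_2\subseteq\mathcal{U}_3$ be frame-generating join-specifications for $P$. For $k\in\{1,2,3\}$ let $\eta_k:P\to\mathcal{I}_{\mathcal{U}_k}$ be $p\mapsto p^\downarrow$. Then there are frame morphisms $\phi_1:\mathcal{I}_{\mathcal{U}_1}\to\mathcal{I}_{\mathcal{U}_2}$, $\phi_2:\mathcal{I}_{\mathcal{U}_2}\to\mathcal{I}_{\mathcal{U}_3}$ and $\phi:\mathcal{I}_{\mathcal{U}_1}\to\mathcal{I}_{\mathcal{U}_3}$ with $\phi=\phi_2\circ\phi_1$, $\phi_1\circ\eta_1=\eta_2$, $\phi_2\circ\eta_2=\eta_3$ and $\phi\circ\eta_1=\eta_3$; moreover $\phi_1,\phi_2,\phi$ are the unique frame morphisms satisfying these respective equations with the $\eta$ maps.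
   Context: A join-specification for $P$ is a set $\mathcal{U}\subseteq\wp(P)$ such that $\bigvee S$ exists in $P$ for every $S\in\mathcal{U}$ and $\{p\}\in\mathcal{U}$ for every $p\in P$. A $\mathcal{U}$-ideal is a down-closed $C\subseteq P$ with $\bigvee S\in C$ whenever $S\in\mathcal{U}$, $S\subseteq C$; $\mathcal{I}_{\mathcal{U}}$ is the complete lattice of $\mathcal{U}$-ideals under inclusion; $\mathcal{U}$ is frame-generating if $\mathcal{I}_{\mathcal{U}}$ is a frame. A frame morphism is a lattice homomorphism preserving arbitrary joins. *)

theory Defs
  imports Main
begin

text \<open>The poset P is modelled as a type of class order (P = UNIV).\<close>

definition is_join :: "'a::order set \<Rightarrow> 'a \<Rightarrow> bool" where
  "is_join S x \<longleftrightarrow> (\<forall>s\<in>S. s \<le> x) \<and> (\<forall>y. (\<forall>s\<in>S. s \<le> y) \<longrightarrow> x \<le> y)"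

definition join_spec :: "'a::order set set \<Rightarrow> bool" where
  "join_spec U \<longleftrightarrow> (\<forall>S\<in>U. \<exists>x. is_join S x) \<and> (\<forall>p. {p} \<in> U)"

definition U_ideal :: "'a::order set set \<Rightarrow> 'a set \<Rightarrow> bool" where
  "U_ideal U C \<longleftrightarrow> (\<forall>x y. x \<in> C \<longrightarrow> y \<le> x \<longrightarrow> y \<in> C)
     \<and> (\<forall>S\<in>U. S \<subseteq> C \<longrightarrow> (\<forall>x. is_join S x \<longrightarrow> x \<in> C))"

definition ideals :: "'a::order set set \<Rightarrow> 'a set set" where
  "ideals U = {C. U_ideal U C}"

text \<open>Join in the complete lattice of U-ideals ordered by inclusion
  (least U-ideal containing the union); meets are intersections.\<close>
definition ideal_join :: "'a::order set set \<Rightarrow> 'a set set \<Rightarrow> 'a set" where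
  "ideal_join U F = \<Inter>{C \<in> ideals U. \<Union>F \<subseteq> C}"

definition frame_generating :: "'a::order set set \<Rightarrow> bool" where
  "frame_generating U \<longleftrightarrow>
     (\<forall>a\<in>ideals U. \<forall>F. F \<subseteq> ideals U \<longrightarrow>
        a \<inter> ideal_join U F = ideal_join U ((\<lambda>b. a \<inter> b) ` F))"

text \<open>Frame morphism I_U -> I_V: lattice homomorphism (binary meets and joins)
  preserving arbitrary joins; only its values on U-ideals matter.\<close>
definition frame_hom :: "'a::order set set \<Rightarrow> 'a set set \<Rightarrow> ('a set \<Rightarrow> 'a set) \<Rightarrow> bool" where
  "frame_hom U V f \<longleftrightarrow> (\<forall>a\<in>ideals U. f a \<in> ideals V)
     \<and> (\<forall>a\<in>ideals U. \<forall>b\<in>ideals U. f (a \<inter> b) = f a \<inter> f b)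
     \<and> (\<forall>a\<in>ideals U. \<forall>b\<in>ideals U. f (ideal_join U {a, b}) = ideal_join V {f a, f b})
     \<and> (\<forall>F. F \<subseteq> ideals U \<longrightarrow> f (ideal_join U F) = ideal_join V (f ` F))"

definition down :: "'a::order \<Rightarrow> 'a set" where
  "down p = {q. q \<le> p}"

end

theory Submission
  imports Defs
begin

text \<open>For \<open>U \<subseteq> V\<close> every \<open>V\<close>-ideal is a \<open>U\<close>-ideal, and the only candidate for a frame
  morphism \<open>I\<^sub>U \<rightarrow> I\<^sub>V\<close> fixing principal downsets is \<open>C \<mapsto>\<close> the \<open>V\<close>-ideal generated
  by \<open>C\<close>: each ideal is the join of the principal downsets below its elements, and
  these joins must be preserved. This closure map preserves arbitrary joins because
  generating a \<open>V\<close>-ideal absorbs generating a \<open>U\<close>-ideal first, and it preserves binary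
  meets by the frame distributivity of \<open>I\<^sub>V\<close>, applied once on each side of the meet.
  The same absorption gives \<open>\<phi> = \<phi>\<^sub>2 \<circ> \<phi>\<^sub>1\<close>.\<close>

definition ideal_closure :: "'a::order set set \<Rightarrow> 'a set \<Rightarrow> 'a set" where
  "ideal_closure V X = \<Inter>{C \<in> ideals V. X \<subseteq> C}"

lemma ideal_join_eq_ideal_closure: "ideal_join V F = ideal_closure V (\<Union>F)"
  by (simp add: ideal_join_def ideal_closure_def)

lemma ideal_closure_in_ideals: "ideal_closure V X \<in> ideals V"
  unfolding ideal_closure_def ideals_def U_ideal_def by blast

lemma ideal_closure_superset: "X \<subseteq> ideal_closure V X"
  unfolding ideal_closure_def by blast

lemma ideal_closure_least: "C \<in> ideals V \<Longrightarrow> X \<subseteq> C \<Longrightarrow> ideal_closure V X \<subseteq> C"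
  unfolding ideal_closure_def by blast

lemma ideal_closure_ideal: "C \<in> ideals V \<Longrightarrow> ideal_closure V C = C"
  by (meson ideal_closure_least ideal_closure_superset subset_antisym order_refl)

lemma ideal_closure_mono: "X \<subseteq> Y \<Longrightarrow> ideal_closure V X \<subseteq> ideal_closure V Y"
  by (meson ideal_closure_in_ideals ideal_closure_least ideal_closure_superset order_trans)

lemma ideals_antimono: "U \<subseteq> V \<Longrightarrow> ideals V \<subseteq> ideals U"
  unfolding ideals_def U_ideal_def by blast

lemma ideal_closure_absorb:
  assumes "U \<subseteq> V"
  shows "ideal_closure V (ideal_closure U X) = ideal_closure V X"
proof
  have "ideal_closure V X \<in> ideals U"
    using assms ideals_antimono ideal_closure_in_ideals by blast
  then have "ideal_closure U X \<subseteq> ideal_closure V X"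
    by (simp add: ideal_closure_least ideal_closure_superset)
  then show "ideal_closure V (ideal_closure U X) \<subseteq> ideal_closure V X"
    by (simp add: ideal_closure_in_ideals ideal_closure_least)
  show "ideal_closure V X \<subseteq> ideal_closure V (ideal_closure U X)"
    by (simp add: ideal_closure_mono ideal_closure_superset)
qed

lemma down_in_ideals: "down p \<in> ideals V"
  unfolding ideals_def U_ideal_def down_def is_join_def by auto

lemma ideal_closure_down: "ideal_closure V (down p) = down p"
  by (simp add: ideal_closure_ideal down_in_ideals)

lemma down_subset_ideal: "a \<in> ideals U \<Longrightarrow> q \<in> a \<Longrightarrow> down q \<subseteq> a"
  unfolding ideals_def U_ideal_def down_def by blast

lemma Union_down_ideal: "a \<in> ideals U \<Longrightarrow> \<Union>(down ` a) = a"
  using down_subset_ideal by (fastforce simp: down_def)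

lemma ideal_closure_eq_ideal_join_down:
  "a \<in> ideals U \<Longrightarrow> ideal_closure V a = ideal_join V (down ` a)"
  by (simp add: ideal_join_eq_ideal_closure Union_down_ideal)

lemma Int_ideal_closure:
  assumes "frame_generating V" and "C \<in> ideals V" and "a \<in> ideals U"
  shows "C \<inter> ideal_closure V a = ideal_closure V (C \<inter> a)"
proof -
  have "down ` a \<subseteq> ideals V"
    using down_in_ideals by blast
  then have "C \<inter> ideal_closure V a = ideal_join V ((\<inter>) C ` down ` a)"
    using assms unfolding frame_generating_def ideal_closure_eq_ideal_join_down[OF assms(3)]
    by blast
  also have "\<dots> = ideal_closure V (C \<inter> a)"
    using Union_down_ideal[OF assms(3)] by (simp add: ideal_join_eq_ideal_closure)
  finally show ?thesis .
qed

lemma ideal_closure_Int: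
  assumes "frame_generating V" and a: "a \<in> ideals U" and b: "b \<in> ideals U"
  shows "ideal_closure V (a \<inter> b) = ideal_closure V a \<inter> ideal_closure V b"
proof
  show "ideal_closure V (a \<inter> b) \<subseteq> ideal_closure V a \<inter> ideal_closure V b"
    by (simp add: ideal_closure_mono)
  have "ideal_closure V a \<inter> down q \<subseteq> ideal_closure V (a \<inter> b)" if "q \<in> b" for q
  proof -
    have "ideal_closure V a \<inter> down q = ideal_closure V (down q \<inter> a)"
      using Int_ideal_closure[OF assms(1) down_in_ideals a] by blast
    also have "\<dots> \<subseteq> ideal_closure V (a \<inter> b)"
      using down_subset_ideal[OF b that] by (intro ideal_closure_mono) blast
    finally show ?thesis .
  qed
  then have "ideal_closure V a \<inter> b \<subseteq> ideal_closure V (a \<inter> b)"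
    using Union_down_ideal[OF b] by blast
  then have "ideal_closure V (ideal_closure V a \<inter> b) \<subseteq> ideal_closure V (a \<inter> b)"
    by (simp add: ideal_closure_in_ideals ideal_closure_least)
  then show "ideal_closure V a \<inter> ideal_closure V b \<subseteq> ideal_closure V (a \<inter> b)"
    using Int_ideal_closure[OF assms(1) ideal_closure_in_ideals b] by simp
qed

lemma ideal_closure_ideal_join:
  assumes "U \<subseteq> V"
  shows "ideal_closure V (ideal_join U F) = ideal_join V (ideal_closure V ` F)"
proof -
  have "ideal_closure V (\<Union>(ideal_closure V ` F)) = ideal_closure V (\<Union>F)"
  proof
    show "ideal_closure V (\<Union>F) \<subseteq> ideal_closure V (\<Union>(ideal_closure V ` F))"
      using ideal_closure_superset by (intro ideal_closure_mono) blast
    show "ideal_closure V (\<Union>(ideal_closure V ` F)) \<subseteq> ideal_closure V (\<Union>F)"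
      by (intro ideal_closure_least ideal_closure_in_ideals)
        (meson UN_least Union_upper ideal_closure_mono)
  qed
  then show ?thesis
    using assms by (simp add: ideal_join_eq_ideal_closure ideal_closure_absorb)
qed

lemma frame_hom_ideal_closure:
  assumes "U \<subseteq> V" and "frame_generating V"
  shows "frame_hom U V (ideal_closure V)"
  unfolding frame_hom_def
  using ideal_closure_in_ideals ideal_closure_Int[OF assms(2)]
    ideal_closure_ideal_join[OF assms(1)]
  by auto

lemma frame_hom_fixing_down_eq_ideal_closure:
  assumes "frame_hom U V \<psi>" and "\<forall>p. \<psi> (down p) = down p" and "C \<in> ideals U"
  shows "\<psi> C = ideal_closure V C"
proof -
  have "C = ideal_join U (down ` C)"
    using assms(3) by (simp add: ideal_join_eq_ideal_closure Union_down_ideal ideal_closure_ideal)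
  then have "\<psi> C = ideal_join V (\<psi> ` down ` C)"
    using assms(1) down_in_ideals unfolding frame_hom_def by (metis image_subsetI)
  also have "\<psi> ` down ` C = down ` C"
    using assms(2) by (auto simp: image_iff)
  finally show ?thesis
    using ideal_closure_eq_ideal_join_down[OF assms(3)] by simp
qed

theorem lemma4p1:
  fixes U1 U2 U3 :: "'a::order set set"
  assumes "join_spec U1" "join_spec U2" "join_spec U3"
    and "frame_generating U1" "frame_generating U2" "frame_generating U3"
    and "U1 \<subseteq> U2" "U2 \<subseteq> U3"
  shows "\<exists>\<phi>1 \<phi>2 \<phi>.
     frame_hom U1 U2 \<phi>1 \<and> frame_hom U2 U3 \<phi>2 \<and> frame_hom U1 U3 \<phi>
   \<and> (\<forall>C\<in>ideals U1. \<phi> C = \<phi>2 (\<phi>1 C))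
   \<and> (\<forall>p. \<phi>1 (down p) = down p) \<and> (\<forall>p. \<phi>2 (down p) = down p) \<and> (\<forall>p. \<phi> (down p) = down p)
   \<and> (\<forall>\<psi>. frame_hom U1 U2 \<psi> \<and> (\<forall>p. \<psi> (down p) = down p) \<longrightarrow> (\<forall>C\<in>ideals U1. \<psi> C = \<phi>1 C))
   \<and> (\<forall>\<psi>. frame_hom U2 U3 \<psi> \<and> (\<forall>p. \<psi> (down p) = down p) \<longrightarrow> (\<forall>C\<in>ideals U2. \<psi> C = \<phi>2 C))
   \<and> (\<forall>\<psi>. frame_hom U1 U3 \<psi> \<and> (\<forall>p. \<psi> (down p) = down p) \<longrightarrow> (\<forall>C\<in>ideals U1. \<psi> C = \<phi> C))"
proof -
  have hom12: "frame_hom U1 U2 (ideal_closure U2)"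
    using assms(7,5) by (rule frame_hom_ideal_closure)
  have hom23: "frame_hom U2 U3 (ideal_closure U3)"
    using assms(8,6) by (rule frame_hom_ideal_closure)
  have hom13: "frame_hom U1 U3 (ideal_closure U3)"
    using assms(6-8) by (intro frame_hom_ideal_closure) auto
  have unique: "\<forall>\<psi>. frame_hom U V \<psi> \<and> (\<forall>p. \<psi> (down p) = down p)
      \<longrightarrow> (\<forall>C\<in>ideals U. \<psi> C = ideal_closure V C)" for U V :: "'a set set"
    using frame_hom_fixing_down_eq_ideal_closure by blast
  show ?thesis
    by (rule exI[of _ "ideal_closure U2"], rule exI[of _ "ideal_closure U3"],
        rule exI[of _ "ideal_closure U3"])
      (intro conjI hom12 hom23 hom13 unique allI ballI;
        simp add: ideal_closure_absorb[OF assms(8)] ideal_closure_down)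
qed

end
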